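(* For $n\ge1$ choose uniformly at random one of the $\binom{3n}{n,n,n}$ lattice paths from $(n,n,n)$ to $(0,0,0)$ with steps $(-1,0,0),(0,-1,0),(0,0,-1)$, and let $X_n$ be the integer $k$ such that the first visit of the path to the diagonal $\{x=y=z\}$ after the start is at $(k,k,k)$. Then $$\mathbb{P}(X_n=k)=\frac{a_{n-k,1}\binom{3k}{k,k,k}}{\binom{3n}{n,n,n}},\qquad0\le k\le n-1,$$ where $a_{m,1}$ is the number of such paths from $(m,m,m)$ to the origin not visiting the diagonal strictly between start and end ($a_{0,1}=0$). Moreover $n-X_n$ converges in distribution to a random variable $X$ with $\mathbb{P}(X=\ell)=a_{\ell,1}/3^{3\ell}$, $\ell\ge0$. *)

theory Defs
  imports "HOL-Probability.Probability"
begin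

text \<open>A lattice path from (n,n,n) to (0,0,0) is encoded as the list of its steps:
  step 0 = (-1,0,0), step 1 = (0,-1,0), step 2 = (0,0,-1).\<close>

definition lattice_paths :: "nat \<Rightarrow> nat list set" where
  "lattice_paths n = {p. set p \<subseteq> {0,1,2} \<and> count_list p 0 = n \<and>
                         count_list p 1 = n \<and> count_list p 2 = n}"

definition pos :: "nat \<Rightarrow> nat list \<Rightarrow> nat \<Rightarrow> nat \<times> nat \<times> nat" where
  "pos n p i = (n - count_list (take i p) 0, n - count_list (take i p) 1,
                n - count_list (take i p) 2)"

definition on_diag :: "nat \<times> nat \<times> nat \<Rightarrow> bool" where
  "on_diag q \<longleftrightarrow> (case q of (x, y, z) \<Rightarrow> x = y \<and> y = z)"

definition first_visit_time :: "nat \<Rightarrow> nat list \<Rightarrow> nat" where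
  "first_visit_time n p = (LEAST i. 0 < i \<and> on_diag (pos n p i))"

definition first_visit :: "nat \<Rightarrow> nat list \<Rightarrow> nat" where
  "first_visit n p = fst (pos n p (first_visit_time n p))"

text \<open>a_{m,1}: paths from (m,m,m) to the origin not visiting the diagonal strictly
  between start and end; the condition p \<noteq> [] enforces the convention a_{0,1} = 0.\<close>
definition a1 :: "nat \<Rightarrow> nat" where
  "a1 m = card {p \<in> lattice_paths m. p \<noteq> [] \<and>
                  (\<forall>i. 0 < i \<and> i < length p \<longrightarrow> \<not> on_diag (pos m p i))}"

definition multinom3 :: "nat \<Rightarrow> real" where
  "multinom3 n = fact (3 * n) / (fact n) ^ 3"

definition X_dist :: "nat \<Rightarrow> nat pmf" where
  "X_dist n = map_pmf (first_visit n) (pmf_of_set (lattice_paths n))"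

end

(*
  Cutting a path at its first return to the diagonal, say at (k,k,k), splits it uniquely into
  an excursion from (n,n,n) to (k,k,k), counted by a_{n-k,1}, followed by an arbitrary path
  from (k,k,k) to the origin. This gives the law of X_n and, since X_n < n, the renewal
  equation u_n = sum_{k<n} f_{n-k} u_k for u_n = binom(3n;n,n,n) / 27^n, f_l = a_{l,1} / 27^l.
  Because binom(3(n-l);...) / binom(3n;...) tends to 27^-l, P(n - X_n = l) tends to f_l, and
  for integer-valued variables pointwise convergence of the mass functions is weak convergence
  as soon as the limit has total mass 1. Fatou gives sum f_l <= 1. Conversely, if sum f_l < 1
  the renewal equation would bound sum u_n by 1 / (1 - sum f_l), whereas u_n >= 2 / (9 n).
*)
theory Submission
  imports Defs "HOL-Combinatorics.Multiset_Permutations" "HOL-Real_Asymp.Real_Asymp"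
begin

lemma renewal_suminf_ge_1:
  fixes f u :: "nat \<Rightarrow> real"
  assumes f_nonneg: "\<And>n. 0 \<le> f n" and f_summable: "summable f"
    and u_nonneg: "\<And>n. 0 \<le> u n" and "u 0 = 1"
    and renewal: "\<And>n. 0 < n \<Longrightarrow> u n = (\<Sum>k<n. f (n - k) * u k)"
    and "\<not> summable u"
  shows "1 \<le> suminf f"
proof (rule ccontr)
  assume "\<not> 1 \<le> suminf f"
  then have f_sum_less: "suminf f < 1"
    by simp
  have tail_le: "(\<Sum>n\<in>{Suc k..N}. f (n - k)) \<le> suminf f" for k N
  proof -
    have "inj_on (\<lambda>n. n - k) {Suc k..N}"
      by (rule inj_onI) auto
    then have "(\<Sum>n\<in>{Suc k..N}. f (n - k)) = sum f ((\<lambda>n. n - k) ` {Suc k..N})"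
      by (simp add: sum.reindex)
    also have "\<dots> \<le> suminf f"
      using f_summable f_nonneg by (intro sum_le_suminf) auto
    finally show ?thesis .
  qed
  have partial_le: "(\<Sum>n\<le>N. u n) \<le> 1 + suminf f * (\<Sum>n\<le>N. u n)" for N
  proof -
    have u_eq: "u n = of_bool (n = 0) + (\<Sum>k<n. f (n - k) * u k)" for n
      using renewal[of n] \<open>u 0 = 1\<close> by (cases "n = 0") simp_all
    have "(\<Sum>n\<le>N. u n) = (\<Sum>n\<le>N. of_bool (n = 0) + (\<Sum>k<n. f (n - k) * u k))"
      by (rule sum.cong[OF refl u_eq])
    also have "\<dots> = 1 + (\<Sum>n\<le>N. \<Sum>k<n. f (n - k) * u k)"
      by (simp add: sum.distrib)
    also have "\<dots> = 1 + (\<Sum>k<N. (\<Sum>n\<in>{Suc k..N}. f (n - k)) * u k)"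
      by (simp add: sum.nested_swap' sum_distrib_right)
    also have "\<dots> \<le> 1 + (\<Sum>k<N. suminf f * u k)"
      using u_nonneg tail_le by (intro add_left_mono sum_mono mult_right_mono) auto
    also have "\<dots> \<le> 1 + suminf f * (\<Sum>k\<le>N. u k)"
      unfolding sum_distrib_left[symmetric] using u_nonneg f_nonneg f_summable
      by (intro add_left_mono mult_left_mono sum_mono2 suminf_nonneg) auto
    finally show ?thesis .
  qed
  have "summable u"
  proof (rule summableI_nonneg_bounded[OF u_nonneg])
    fix N
    have "(\<Sum>n<N. u n) \<le> (\<Sum>n\<le>N. u n)"
      using u_nonneg by (intro sum_mono2) auto
    also have "\<dots> \<le> 1 / (1 - suminf f)"
      using partial_le[of N] f_sum_less by (simp add: field_simps)
    finally show "(\<Sum>n<N. u n) \<le> 1 / (1 - suminf f)" .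
  qed
  with \<open>\<not> summable u\<close> show False
    by contradiction
qed

lemma sum_le_1_if_pmf_tendsto:
  assumes "\<And>x. (\<lambda>n. pmf (P n) x) \<longlonglongrightarrow> g x" and "finite A"
  shows "sum g A \<le> 1"
proof (rule LIMSEQ_le_const2)
  show "(\<lambda>n. \<Sum>x\<in>A. pmf (P n) x) \<longlonglongrightarrow> sum g A"
    by (intro tendsto_sum assms)
  show "\<exists>N. \<forall>n\<ge>N. (\<Sum>x\<in>A. pmf (P n) x) \<le> 1"
    using measure_measure_pmf_finite[OF \<open>finite A\<close>] measure_pmf.prob_le_1 by metis
qed

lemma pmf_embed_pmf_sums:
  fixes g :: "nat \<Rightarrow> real"
  assumes "\<And>x. 0 \<le> g x" and "g sums 1"
  shows "pmf (embed_pmf g) x = g x"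
proof (rule pmf_embed_pmf)
  show "(\<integral>\<^sup>+x. ennreal (g x) \<partial>count_space UNIV) = 1"
    using assms by (simp add: nn_integral_count_space_nat suminf_ennreal2 sums_iff)
qed (use assms in simp)

lemma weak_conv_m_of_pmf_tendsto:
  fixes P :: "nat \<Rightarrow> nat pmf" and Q :: "nat pmf"
  assumes "\<And>l. (\<lambda>n. pmf (P n) l) \<longlonglongrightarrow> pmf Q l"
  shows "weak_conv_m (\<lambda>n. measure_pmf (map_pmf real (P n))) (measure_pmf (map_pmf real Q))"
  unfolding weak_conv_m_def weak_conv_def cdf_def
proof (intro allI impI)
  fix x :: real
  define L where "L = {l::nat. real l \<le> x}"
  have "finite L"
    unfolding L_def by (rule finite_subset[of _ "{..nat \<lceil>x\<rceil>}"]) (auto, linarith)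
  then have cdf: "measure (measure_pmf (map_pmf real M)) {..x} = sum (pmf M) L" for M
    using measure_measure_pmf_finite[of L M] by (simp add: L_def vimage_def)
  show "(\<lambda>n. measure (measure_pmf (map_pmf real (P n))) {..x}) \<longlonglongrightarrow>
          measure (measure_pmf (map_pmf real Q)) {..x}"
    unfolding cdf by (intro tendsto_sum assms)
qed

lemma pmf_map_diff_left:
  fixes M :: "nat pmf"
  assumes "set_pmf M \<subseteq> {..N}" and "l \<le> N"
  shows "pmf (map_pmf (\<lambda>k. N - k) M) l = pmf M (N - l)"
proof -
  have "(\<lambda>k. N - k) -` {l} \<inter> set_pmf M = {N - l} \<inter> set_pmf M"
    using assms by auto
  then show ?thesis
    by (metis pmf_map measure_Int_set_pmf measure_pmf_single)
qed

lemma tendsto_ratio_shift: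
  fixes a :: "nat \<Rightarrow> 'a::real_normed_field"
  assumes "\<And>n. a n \<noteq> 0" and ratio: "(\<lambda>n. a n / a (Suc n)) \<longlonglongrightarrow> c"
  shows "(\<lambda>n. a n / a (n + l)) \<longlonglongrightarrow> c ^ l"
proof (induction l)
  case 0
  then show ?case
    using assms(1) by simp
next
  case (Suc l)
  have "(\<lambda>n. a (n + l) / a (Suc (n + l))) \<longlonglongrightarrow> c"
    using LIMSEQ_ignore_initial_segment[OF ratio, of l] by simp
  from tendsto_mult[OF Suc.IH this] show ?case
    using assms(1) by (simp add: field_simps)
qed

lemma length_eq_count_list_012:
  "set xs \<subseteq> {0,1,2} \<Longrightarrow>
   length xs = count_list xs 0 + count_list xs 1 + count_list xs (2::nat)"
  by (induction xs) auto

lemma count_list_take_le: "count_list (take i xs) x \<le> count_list xs x"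
  by (metis append_take_drop_id count_list_append le_add1)

lemma count_list_drop: "count_list (drop i xs) x = count_list xs x - count_list (take i xs) x"
  by (metis append_take_drop_id count_list_append diff_add_inverse)

lemma lattice_paths_length: "p \<in> lattice_paths n \<Longrightarrow> length p = 3 * n"
  using length_eq_count_list_012[of p] by (simp add: lattice_paths_def)

lemma lattice_paths_eq_permutations_of_multiset:
  "lattice_paths n =
     permutations_of_multiset (replicate_mset n 0 + replicate_mset n 1 + replicate_mset n 2)"
  (is "_ = permutations_of_multiset ?M")
proof -
  have "p \<in> lattice_paths n \<longleftrightarrow> (\<forall>x. count_list p x = count ?M x)" for p
  proof
    assume "p \<in> lattice_paths n"
    then show "\<forall>x. count_list p x = count ?M x"
      by (auto simp: lattice_paths_def count_list_0_iff)
  next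
    assume counts: "\<forall>x. count_list p x = count ?M x"
    have "x \<in> {0,1,2}" if "x \<in> set p" for x
      using that counts[rule_format, of x] count_list_0_iff[of p x] by (auto split: if_splits)
    then have "set p \<subseteq> {0,1,2}" by blast
    with counts show "p \<in> lattice_paths n"
      by (simp add: lattice_paths_def)
  qed
  then show ?thesis
    by (auto simp: permutations_of_multiset_def multiset_eq_iff count_mset)
qed

lemma multinom3_pos: "0 < multinom3 n"
  by (simp add: multinom3_def)

lemma card_lattice_paths: "real (card (lattice_paths n)) = multinom3 n"
proof -
  let ?M = "replicate_mset n 0 + replicate_mset n 1 + replicate_mset n (2::nat)"
  have "(\<Prod>x\<in>set_mset ?M. fact (count ?M x)) = (fact n ^ 3 :: nat)"
    by (cases "n = 0") (simp_all add: power3_eq_cube)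
  moreover have "size ?M = 3 * n" by simp
  ultimately have "card (lattice_paths n) * fact n ^ 3 = (fact (3 * n) :: nat)"
    using card_permutations_of_multiset_aux[of ?M]
    by (simp only: lattice_paths_eq_permutations_of_multiset)
  then have "real (card (lattice_paths n)) * fact n ^ 3 = fact (3 * n)"
    by (metis of_nat_fact of_nat_mult of_nat_power)
  then show ?thesis
    unfolding multinom3_def by (simp add: field_simps)
qed

lemma finite_lattice_paths: "finite (lattice_paths n)"
  by (simp add: lattice_paths_eq_permutations_of_multiset)

lemma lattice_paths_nonempty: "lattice_paths n \<noteq> {}"
  by (simp add: lattice_paths_eq_permutations_of_multiset)

definition balanced :: "nat list \<Rightarrow> bool" where
  "balanced xs \<longleftrightarrow> count_list xs 0 = count_list xs 1 \<and> count_list xs 1 = count_list xs 2"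

lemma on_diag_pos_iff_balanced:
  "p \<in> lattice_paths n \<Longrightarrow> on_diag (pos n p i) \<longleftrightarrow> balanced (take i p)"
  using count_list_take_le[of i p 0] count_list_take_le[of i p 1] count_list_take_le[of i p 2]
  by (auto simp: lattice_paths_def on_diag_def pos_def balanced_def)

lemma balanced_in_lattice_paths:
  "set xs \<subseteq> {0,1,2} \<Longrightarrow> balanced xs \<Longrightarrow> xs \<in> lattice_paths (count_list xs 0)"
  by (simp add: lattice_paths_def balanced_def)

definition excursions :: "nat \<Rightarrow> nat list set" where
  "excursions m = {q \<in> lattice_paths m. q \<noteq> [] \<and>
                     (\<forall>i. 0 < i \<and> i < length q \<longrightarrow> \<not> balanced (take i q))}"

lemma a1_eq_card_excursions: "a1 m = card (excursions m)"
  unfolding a1_def excursions_def by (metis (lifting) on_diag_pos_iff_balanced)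

lemma excursions_0: "excursions 0 = {}"
  by (auto simp: excursions_def dest: lattice_paths_length)

lemma a1_0: "a1 0 = 0"
  by (simp add: a1_eq_card_excursions excursions_0)

lemma first_visit_timeD:
  assumes p: "p \<in> lattice_paths n" and "0 < n"
  defines "t \<equiv> first_visit_time n p"
  shows "0 < t" and "t \<le> 3 * n" and "balanced (take t p)"
    and "\<And>i. 0 < i \<Longrightarrow> i < t \<Longrightarrow> \<not> balanced (take i p)"
proof -
  have "balanced (take (3 * n) p)"
    using p by (simp add: lattice_paths_length balanced_def lattice_paths_def)
  then have end_visit: "0 < 3 * n \<and> on_diag (pos n p (3 * n))"
    using \<open>0 < n\<close> on_diag_pos_iff_balanced[OF p] by simp
  show "0 < t" "balanced (take t p)"
    using LeastI[of "\<lambda>i. 0 < i \<and> on_diag (pos n p i)", OF end_visit]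
      on_diag_pos_iff_balanced[OF p]
    by (simp_all add: t_def first_visit_time_def)
  show "t \<le> 3 * n"
    unfolding t_def first_visit_time_def
    by (rule Least_le[of "\<lambda>i. 0 < i \<and> on_diag (pos n p i)", OF end_visit])
  show "\<not> balanced (take i p)" if "0 < i" "i < t" for i
    using not_less_Least[of i "\<lambda>i. 0 < i \<and> on_diag (pos n p i)"] that
      on_diag_pos_iff_balanced[OF p]
    by (auto simp: t_def first_visit_time_def)
qed

lemma first_visit_decomposition:
  assumes p: "p \<in> lattice_paths n" and "0 < n"
  defines "t \<equiv> first_visit_time n p"
  shows "take t p \<in> excursions (n - first_visit n p)"
    and "drop t p \<in> lattice_paths (first_visit n p)"
proof -
  define c where "c = count_list (take t p) 0"
  have c_le: "c \<le> n"
    using p count_list_take_le[of t p 0] by (simp add: c_def lattice_paths_def)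
  have visit: "first_visit n p = n - c"
    by (simp add: first_visit_def pos_def c_def t_def)
  have set_p: "set p \<subseteq> {0,1,2}"
    using p by (simp add: lattice_paths_def)
  have prefix: "take t p \<in> lattice_paths c"
    using balanced_in_lattice_paths[OF _ first_visit_timeD(3)[OF p \<open>0 < n\<close>]] set_p
      set_take_subset[of t p]
    by (auto simp: c_def t_def)
  have "length (take t p) = t"
    using first_visit_timeD(2)[OF p \<open>0 < n\<close>] lattice_paths_length[OF p] by (simp add: t_def)
  with first_visit_timeD(1,4)[OF p \<open>0 < n\<close>] have "take t p \<in> excursions c"
    using prefix by (auto simp: excursions_def t_def)
  then show "take t p \<in> excursions (n - first_visit n p)"
    using c_le visit by simp
  have "drop t p \<in> lattice_paths (n - c)"
    using p prefix set_drop_subset[of t p] by (auto simp: lattice_paths_def count_list_drop)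
  then show "drop t p \<in> lattice_paths (first_visit n p)"
    using visit by simp
qed

lemma first_visit_less: "p \<in> lattice_paths n \<Longrightarrow> 0 < n \<Longrightarrow> first_visit n p < n"
  using first_visit_decomposition(1) excursions_0 by (metis empty_iff not_less diff_is_0_eq)

lemma first_visit_append:
  assumes q: "q \<in> excursions m" and r: "r \<in> lattice_paths k"
  shows "q @ r \<in> lattice_paths (m + k)" and "first_visit (m + k) (q @ r) = k"
proof -
  have q_path: "q \<in> lattice_paths m"
    using q by (simp add: excursions_def)
  have "0 < m"
    using q excursions_0 by (metis empty_iff gr0I)
  have len_q: "length q = 3 * m"
    using q_path by (rule lattice_paths_length)
  show qr_path: "q @ r \<in> lattice_paths (m + k)"
    using q_path r by (simp add: lattice_paths_def)
  have "first_visit_time (m + k) (q @ r) = 3 * m"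
    unfolding first_visit_time_def
  proof (rule Least_equality)
    show "0 < 3 * m \<and> on_diag (pos (m + k) (q @ r) (3 * m))"
      using \<open>0 < m\<close> q_path len_q on_diag_pos_iff_balanced[OF qr_path]
      by (simp add: balanced_def lattice_paths_def)
    show "3 * m \<le> i" if "0 < i \<and> on_diag (pos (m + k) (q @ r) i)" for i
    proof (rule ccontr)
      assume "\<not> 3 * m \<le> i"
      with that q len_q on_diag_pos_iff_balanced[OF qr_path] show False
        by (auto simp: excursions_def)
    qed
  qed
  then show "first_visit (m + k) (q @ r) = k"
    using q_path len_q by (simp add: first_visit_def pos_def lattice_paths_def)
qed

lemma first_visit_eq_image_append:
  assumes "k < n"
  shows "{p \<in> lattice_paths n. first_visit n p = k} =
           (\<lambda>(q, r). q @ r) ` (excursions (n - k) \<times> lattice_paths k)"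
proof (intro equalityI subsetI)
  fix p assume "p \<in> {p \<in> lattice_paths n. first_visit n p = k}"
  then have p: "p \<in> lattice_paths n" and "first_visit n p = k"
    by auto
  define t where "t = first_visit_time n p"
  have "(take t p, drop t p) \<in> excursions (n - k) \<times> lattice_paths k"
    using first_visit_decomposition[OF p] \<open>first_visit n p = k\<close> \<open>k < n\<close>
    by (simp add: t_def)
  then show "p \<in> (\<lambda>(q, r). q @ r) ` (excursions (n - k) \<times> lattice_paths k)"
    by (rule rev_image_eqI) simp
next
  fix p assume "p \<in> (\<lambda>(q, r). q @ r) ` (excursions (n - k) \<times> lattice_paths k)"
  then show "p \<in> {p \<in> lattice_paths n. first_visit n p = k}"
    using first_visit_append[of _ "n - k" _ k] \<open>k < n\<close> by auto
qed

lemma card_first_visit_eq: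
  assumes "k < n"
  shows "card {p \<in> lattice_paths n. first_visit n p = k} = a1 (n - k) * card (lattice_paths k)"
proof -
  have "inj_on (\<lambda>(q, r). q @ r) (excursions (n - k) \<times> lattice_paths k)"
    by (rule inj_onI) (auto simp: excursions_def dest!: lattice_paths_length)
  then show ?thesis
    by (simp add: first_visit_eq_image_append[OF assms] card_image card_cartesian_product
        a1_eq_card_excursions)
qed

lemma prob_first_visit_eq:
  assumes "k < n"
  shows "measure_pmf.prob (pmf_of_set (lattice_paths n)) {p. first_visit n p = k}
           = real (a1 (n - k)) * multinom3 k / multinom3 n"
proof -
  have "lattice_paths n \<inter> {p. first_visit n p = k} = {p \<in> lattice_paths n. first_visit n p = k}"
    by blast
  then show ?thesis
    by (simp add: measure_pmf_of_set lattice_paths_nonempty finite_lattice_paths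
        card_first_visit_eq[OF assms] flip: card_lattice_paths)
qed

lemma pmf_X_dist: "k < n \<Longrightarrow> pmf (X_dist n) k = real (a1 (n - k)) * multinom3 k / multinom3 n"
  by (simp add: X_dist_def pmf_map vimage_def prob_first_visit_eq)

lemma set_pmf_X_dist: "0 < n \<Longrightarrow> set_pmf (X_dist n) \<subseteq> {..<n}"
  by (auto simp: X_dist_def finite_lattice_paths lattice_paths_nonempty first_visit_less)

lemma multinom3_renewal:
  assumes "0 < n"
  shows "multinom3 n = (\<Sum>k<n. real (a1 (n - k)) * multinom3 k)"
proof -
  have "(\<Sum>k<n. pmf (X_dist n) k) = 1"
    by (rule sum_pmf_eq_1) (simp_all add: set_pmf_X_dist assms)
  with multinom3_pos[of n] show ?thesis
    by (simp add: pmf_X_dist field_simps flip: sum_divide_distrib)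
qed

lemma pmf_reflected_X_dist:
  assumes "0 < N" and "l \<le> N"
  shows "pmf (map_pmf (\<lambda>k. N - k) (X_dist N)) l = real (a1 l) * multinom3 (N - l) / multinom3 N"
proof -
  have "pmf (map_pmf (\<lambda>k. N - k) (X_dist N)) l = pmf (X_dist N) (N - l)"
    using set_pmf_X_dist[OF \<open>0 < N\<close>] \<open>l \<le> N\<close> by (intro pmf_map_diff_left) auto
  also have "\<dots> = real (a1 l) * multinom3 (N - l) / multinom3 N"
  proof (cases "l = 0")
    case True
    then have "N - l \<notin> set_pmf (X_dist N)"
      using set_pmf_X_dist[OF \<open>0 < N\<close>] by auto
    with True show ?thesis
      by (simp add: set_pmf_iff a1_0)
  next
    case False
    with assms show ?thesis
      by (simp add: pmf_X_dist)
  qed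
  finally show ?thesis .
qed

lemma multinom3_Suc:
  "(real n + 1) ^ 2 * multinom3 (Suc n) = 3 * (3 * real n + 1) * (3 * real n + 2) * multinom3 n"
proof -
  have fact_3: "fact (3 * Suc n) =
                  (3 * real n + 1) * (3 * real n + 2) * (3 * (real n + 1)) * fact (3 * n)"
    by (simp add: numeral_3_eq_3 algebra_simps)
  have fact_cube: "(fact (Suc n) :: real) ^ 3 = (real n + 1) ^ 2 * ((real n + 1) * fact n ^ 3)"
    by (simp add: power_mult_distrib[symmetric] add.commute power2_eq_square power3_eq_cube)
  have "real n + 1 \<noteq> 0"
    by linarith
  then show ?thesis
    unfolding multinom3_def fact_3 fact_cube by (simp add: divide_simps) (simp add: algebra_simps)
qed

lemma multinom3_ratio_tendsto: "(\<lambda>n. multinom3 n / multinom3 (Suc n)) \<longlonglongrightarrow> 1 / 27"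
proof -
  have "multinom3 n / multinom3 (Suc n) =
          (real n + 1) ^ 2 / (3 * (3 * real n + 1) * (3 * real n + 2))" for n
    using multinom3_Suc[of n] multinom3_pos[of n] multinom3_pos[of "Suc n"]
    by (simp add: divide_simps)
  moreover have
    "(\<lambda>n. (real n + 1) ^ 2 / (3 * (3 * real n + 1) * (3 * real n + 2))) \<longlonglongrightarrow> 1 / 27"
    by real_asymp
  ultimately show ?thesis
    by simp
qed

lemma multinom3_div_power_ge:
  assumes "0 < n"
  shows "2 / (9 * real n) \<le> multinom3 n / 27 ^ n"
proof -
  define b where "b n = multinom3 n / 27 ^ n" for n
  have "incseq (\<lambda>n. real n * b n)"
  proof (rule incseq_SucI)
    fix n
    have "9 * (real n + 1) ^ 2 * b (Suc n) = (3 * real n + 1) * (3 * real n + 2) * b n"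
      using multinom3_Suc[of n] by (simp add: b_def field_simps)
    moreover have "9 * real n * (real n + 1) * b n \<le> (3 * real n + 1) * (3 * real n + 2) * b n"
      using multinom3_pos[of n] by (intro mult_right_mono) (simp_all add: b_def algebra_simps)
    ultimately have
      "(9 * (real n + 1)) * (real n * b n) \<le> (9 * (real n + 1)) * ((real n + 1) * b (Suc n))"
      by (simp add: power2_eq_square algebra_simps)
    then have "real n * b n \<le> (real n + 1) * b (Suc n)"
      by (rule mult_left_le_imp_le) simp
    then show "real n * b n \<le> real (Suc n) * b (Suc n)"
      by (simp only: of_nat_Suc add.commute[of 1 "real n"])
  qed
  then have "b 1 \<le> real n * b n"
    using incseqD[of "\<lambda>n. real n * b n" 1 n] assms by simp
  moreover have "b 1 = 2 / 9"
    by (simp add: b_def multinom3_def fact_numeral)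
  ultimately have "2 / 9 \<le> real n * b n"
    by simp
  moreover have "0 < real n"
    using assms by simp
  ultimately show ?thesis
    by (simp add: b_def pos_divide_le_eq algebra_simps)
qed

lemma not_summable_multinom3_div_power: "\<not> summable (\<lambda>n. multinom3 n / 27 ^ n)"
proof
  assume "summable (\<lambda>n. multinom3 n / 27 ^ n)"
  then have "summable (\<lambda>n. 2 / (9 * real n))"
    by (rule summable_comparison_test'[where N = 1]) (simp add: multinom3_div_power_ge)
  then have "summable (\<lambda>n. 9 / 2 * (2 / (9 * real n)))"
    by (rule summable_mult)
  then show False
    using not_summable_harmonic[where 'a = real] by (simp add: inverse_eq_divide)
qed

lemma tendsto_pmf_reflected_X_dist:
  "(\<lambda>n. pmf (map_pmf (\<lambda>k. Suc n - k) (X_dist (Suc n))) l) \<longlonglongrightarrow> real (a1 l) / 27 ^ l"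
proof (rule LIMSEQ_offset[where k = l])
  have "(\<lambda>n. multinom3 n / multinom3 (n + l)) \<longlonglongrightarrow> (1 / 27) ^ l"
    using multinom3_pos by (intro tendsto_ratio_shift multinom3_ratio_tendsto) (simp add: less_le)
  then have "(\<lambda>n. real (a1 l) * (multinom3 (Suc n) / multinom3 (Suc n + l))) \<longlonglongrightarrow>
               real (a1 l) * (1 / 27) ^ l"
    by (intro tendsto_mult tendsto_const LIMSEQ_Suc)
  moreover have "pmf (map_pmf (\<lambda>k. Suc (n + l) - k) (X_dist (Suc (n + l)))) l =
                   real (a1 l) * (multinom3 (Suc n) / multinom3 (Suc n + l))" for n
    by (simp add: pmf_reflected_X_dist)
  ultimately show "(\<lambda>n. pmf (map_pmf (\<lambda>k. Suc (n + l) - k) (X_dist (Suc (n + l)))) l) \<longlonglongrightarrow>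
                     real (a1 l) / 27 ^ l"
    by (simp add: power_one_over)
qed

lemma a1_div_power_sums: "(\<lambda>l. real (a1 l) / 27 ^ l) sums 1"
proof -
  let ?f = "\<lambda>l. real (a1 l) / 27 ^ l"
  have partial_le: "sum ?f {..<N} \<le> 1" for N
    by (rule sum_le_1_if_pmf_tendsto[OF tendsto_pmf_reflected_X_dist]) simp
  then have "summable ?f"
    by (intro summableI_nonneg_bounded) auto
  have "1 \<le> suminf ?f"
  proof (rule renewal_suminf_ge_1[where u = "\<lambda>n. multinom3 n / 27 ^ n"])
    show "multinom3 n / 27 ^ n = (\<Sum>k<n. ?f (n - k) * (multinom3 k / 27 ^ k))" if "0 < n" for n
    proof -
      have "multinom3 n / 27 ^ n = (\<Sum>k<n. real (a1 (n - k)) * multinom3 k / 27 ^ n)"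
        by (subst multinom3_renewal[OF \<open>0 < n\<close>]) (simp add: sum_divide_distrib)
      also have "\<dots> = (\<Sum>k<n. ?f (n - k) * (multinom3 k / 27 ^ k))"
      proof (rule sum.cong)
        fix k assume "k \<in> {..<n}"
        then have "(27::real) ^ n = 27 ^ (n - k) * 27 ^ k"
          by (simp flip: power_add)
        then show "real (a1 (n - k)) * multinom3 k / 27 ^ n =
                     ?f (n - k) * (multinom3 k / 27 ^ k)"
          by simp
      qed simp
      finally show ?thesis .
    qed
  qed (use \<open>summable ?f\<close> multinom3_pos not_summable_multinom3_div_power in
       \<open>simp_all add: less_imp_le multinom3_def\<close>)
  moreover have "suminf ?f \<le> 1"
    using \<open>summable ?f\<close> partial_le by (intro suminf_le_const)
  ultimately show ?thesis
    using \<open>summable ?f\<close> by (simp add: sums_iff)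
qed

theorem proposition3p5:
  shows "(\<forall>n k. 1 \<le> n \<and> k \<le> n - 1 \<longrightarrow>
            measure_pmf.prob (pmf_of_set (lattice_paths n)) {p. first_visit n p = k}
              = real (a1 (n - k)) * multinom3 k / multinom3 n)
       \<and> (\<exists>X :: nat pmf. (\<forall>l. pmf X l = real (a1 l) / 3 ^ (3 * l)) \<and>
            weak_conv_m (\<lambda>n. measure_pmf (map_pmf (\<lambda>k. real (Suc n - k)) (X_dist (Suc n))))
                        (measure_pmf (map_pmf real X)))"
proof (intro conjI allI impI exI)
  show "measure_pmf.prob (pmf_of_set (lattice_paths n)) {p. first_visit n p = k}
          = real (a1 (n - k)) * multinom3 k / multinom3 n" if "1 \<le> n \<and> k \<le> n - 1" for n k
    using that by (intro prob_first_visit_eq) arith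
  define X where "X = embed_pmf (\<lambda>l. real (a1 l) / 27 ^ l)"
  have pmf_X: "pmf X l = real (a1 l) / 27 ^ l" for l
    unfolding X_def by (rule pmf_embed_pmf_sums[OF _ a1_div_power_sums]) simp
  then show "pmf X l = real (a1 l) / 3 ^ (3 * l)" for l
    by (simp add: power_mult)
  show "weak_conv_m (\<lambda>n. measure_pmf (map_pmf (\<lambda>k. real (Suc n - k)) (X_dist (Suc n))))
          (measure_pmf (map_pmf real X))"
    using weak_conv_m_of_pmf_tendsto[of "\<lambda>n. map_pmf (\<lambda>k. Suc n - k) (X_dist (Suc n))" X]
    by (simp add: pmf_X tendsto_pmf_reflected_X_dist map_pmf_comp)
qed

end
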